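(* For every $k\in\mathbb{N}$, $$D_{\mathbb{R},4k}\ge\left[\sum_{j=0}^{2k}|B_j|^{\frac{8k}{4k+1}}\right]^{\frac{4k+1}{8k}},\qquad B_j=\sum_{\ell=0}^{\lfloor j/2\rfloor}\frac{k!\,(-3)^{j-2\ell}}{\ell!\,(j-2\ell)!\,(k-j+\ell)!}\ (j=0,\dots,2k),$$ with terms having $k-j+\ell<0$ interpreted as $0$; the $B_j$ are the coefficients of $(x^4+y^4-3x^2y^2)^k$.
   Context: $\ell_\infty^n$ is $\mathbb{R}^n$ with the sup norm; for a polynomial $P$ on $\ell_\infty^n$, $\|P\|=\sup_{x\in[-1,1]^n}|P(x)|$. $D_{\mathbb{R},m}$ is the smallest constant $D$ such that for every $N$ and every real $m$-homogeneous polynomial $P(x)=\sum_{|\alpha|=m}a_\alpha x^\alpha$ on $\ell_\infty^N$, $\big(\sum_{|\alpha|=m}|a_\alpha|^{\frac{2m}{m+1}}\big)^{\frac{m+1}{2m}}\le D\|P\|$. $\lfloor h\rfloor$ is the integer part. *)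

theory Defs
  imports "HOL-Analysis.Analysis"
begin

definition multi_indices :: "nat \<Rightarrow> nat \<Rightarrow> (nat \<Rightarrow> nat) set" where
  "multi_indices N m = {\<alpha>. (\<forall>i\<ge>N. \<alpha> i = 0) \<and> (\<Sum>i<N. \<alpha> i) = m}"

definition hpoly :: "nat \<Rightarrow> nat \<Rightarrow> ((nat \<Rightarrow> nat) \<Rightarrow> real) \<Rightarrow> (nat \<Rightarrow> real) \<Rightarrow> real" where
  "hpoly N m a x = (\<Sum>\<alpha>\<in>multi_indices N m. a \<alpha> * (\<Prod>i<N. x i ^ \<alpha> i))"

definition poly_norm :: "nat \<Rightarrow> nat \<Rightarrow> ((nat \<Rightarrow> nat) \<Rightarrow> real) \<Rightarrow> real" where
  "poly_norm N m a = Sup {\<bar>hpoly N m a x\<bar> | x. \<forall>i<N. \<bar>x i\<bar> \<le> 1}"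

text \<open>Real polynomial Bohnenblust--Hille constant D_{R,m}: the smallest constant D
  (infimum taken in the extended reals, so it is \<infinity> if no such D exists).\<close>
definition BH_real :: "nat \<Rightarrow> ereal" where
  "BH_real m = Inf {ereal D | D. \<forall>N a.
      (\<Sum>\<alpha>\<in>multi_indices N m. \<bar>a \<alpha>\<bar> powr (2 * real m / (real m + 1)))
        powr ((real m + 1) / (2 * real m)) \<le> D * poly_norm N m a}"

definition Bcoef :: "nat \<Rightarrow> nat \<Rightarrow> real" where
  "Bcoef k j = (\<Sum>l = 0..j div 2. if j \<le> k + l then
      fact k * (-3) ^ (j - 2 * l) / (fact l * fact (j - 2 * l) * fact (k + l - j)) else 0)"

end

theory Submission imports Defs begin

(* Any single polynomial P on ell_infty^N with sup norm \<Vert>P\<Vert> > 0 certifies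
   D_{R,m} \<ge> |coefficients of P|_{2m/(m+1)} / \<Vert>P\<Vert>  (lemma BH_real_lower_bound).
   We apply this to the 4k-homogeneous polynomial in two variables
      P_k(x,y) = (x^4 + y^4 - 3 x^2 y^2)^k.
   (1) Expanding (u^2 + v^2 - 3uv)^k twice by the binomial theorem and regrouping
       by the power of v shows that its coefficients are exactly the B_j
       (lemma Bcoef_expansion); substituting u = x^2, v = y^2 identifies P_k with
       the polynomial whose coefficient at x^(4k-2j) y^(2j) is B_j, all other
       coefficients being zero (lemma hpoly_test_coeffs).
   (2) For u, v \<in> [0,1] one has |u^2 + v^2 - 3uv| \<le> 1, and the value 1 is
       attained at (1,0); hence \<Vert>P_k\<Vert> = 1 (lemma poly_norm_test_coeffs).
   (3) The coefficient norm of P_k is the l_{8k/(4k+1)} norm of (B_0,...,B_{2k}),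
       since the odd-indexed coefficients vanish; the theorem follows. *)

text \<open>Double binomial expansion of (u^2 + v^2 - 3uv)^k, indexed by the exponent m
  of (v^2 - 3uv) and the exponent l of v^2 inside it.\<close>
lemma trinomial_double_expansion:
  fixes u v :: real
  shows "(u^2 + v^2 - 3 * u * v) ^ k =
    (\<Sum>m\<le>k. \<Sum>l\<le>m. real (k choose m) * real (m choose l) * (-3) ^ (m - l)
                      * u ^ (2 * k - (m + l)) * v ^ (m + l))"
proof -
  have "(u^2 + v^2 - 3 * u * v) ^ k = ((v^2 + (-3 * u * v)) + u^2) ^ k"
    by (simp add: algebra_simps)
  also have "\<dots> = (\<Sum>m\<le>k. real (k choose m) * (v^2 + (-3 * u * v)) ^ m * (u^2) ^ (k - m))"
    by (rule binomial_ring)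
  also have "\<dots> = (\<Sum>m\<le>k. \<Sum>l\<le>m. real (k choose m) * real (m choose l) * (-3) ^ (m - l)
                      * u ^ (2 * k - (m + l)) * v ^ (m + l))"
  proof (rule sum.cong[OF refl])
    fix m assume m: "m \<in> {..k}"
    have inner: "real (k choose m) * (real (m choose l) * (v^2) ^ l * (-3 * u * v) ^ (m - l)) * (u^2) ^ (k - m)
        = real (k choose m) * real (m choose l) * (-3) ^ (m - l) * u ^ (2 * k - (m + l)) * v ^ (m + l)"
      if l: "l \<le> m" for l
    proof -
      have "2 * k - (m + l) = 2 * (k - m) + (m - l)" and "m + l = 2 * l + (m - l)"
        using m l by auto
      then have "u ^ (2 * k - (m + l)) = (u^2) ^ (k - m) * u ^ (m - l)"
        and "v ^ (m + l) = (v^2) ^ l * v ^ (m - l)"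
        by (simp_all only: power_add power_mult)
      moreover have "(-3 * u * v) ^ (m - l) = (-3) ^ (m - l) * u ^ (m - l) * v ^ (m - l)"
        by (simp only: power_mult_distrib)
      ultimately show ?thesis
        by (simp add: mult_ac)
    qed
    have binom: "(v^2 + (-3 * u * v)) ^ m = (\<Sum>l\<le>m. real (m choose l) * (v^2) ^ l * (-3 * u * v) ^ (m - l))"
      by (rule binomial_ring)
    then show "real (k choose m) * (v^2 + (-3 * u * v)) ^ m * (u^2) ^ (k - m)
      = (\<Sum>l\<le>m. real (k choose m) * real (m choose l) * (-3) ^ (m - l)
                      * u ^ (2 * k - (m + l)) * v ^ (m + l))"
      unfolding binom sum_distrib_left sum_distrib_right by (intro sum.cong refl inner) simp
  qed
  finally show ?thesis .
qed

text \<open>The summand of Bcoef k j indexed by l, i.e. the contribution of the pair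
  (m, l) = (j - l, l) of the double expansion; it vanishes when j > k + l.\<close>
definition Bterm :: "nat \<Rightarrow> nat \<Rightarrow> nat \<Rightarrow> real" where
  "Bterm k j l = (if j \<le> k + l then
      fact k * (-3) ^ (j - 2 * l) / (fact l * fact (j - 2 * l) * fact (k + l - j)) else 0)"

lemma Bcoef_Bterm: "Bcoef k j = (\<Sum>l = 0..j div 2. Bterm k j l)"
  by (simp add: Bcoef_def Bterm_def)

lemma binomial_product_Bterm:
  assumes "l \<le> m" "m \<le> k"
  shows "real (k choose m) * real (m choose l) * (-3) ^ (m - l) = Bterm k (m + l) l"
proof -
  have "real (k choose m) * real (m choose l) = fact k / (fact l * fact (m - l) * fact (k - m))"
    using assms by (simp add: binomial_fact)
  moreover have "m + l - 2 * l = m - l" "k + l - (m + l) = k - m" by auto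
  ultimately show ?thesis
    using assms by (simp add: Bterm_def field_simps)
qed

text \<open>The B_j are the coefficients of (u^2 + v^2 - 3uv)^k: regroup the double
  expansion along j = m + l; the pairs (j, l) not of this form carry Bterm = 0.\<close>
lemma Bcoef_expansion:
  fixes u v :: real
  shows "(u^2 + v^2 - 3 * u * v) ^ k = (\<Sum>j = 0..2 * k. Bcoef k j * u ^ (2 * k - j) * v ^ j)"
proof -
  define R where "R = (\<lambda>(j, l). Bterm k j l * u ^ (2 * k - j) * v ^ j)"
  define shift where "shift = (\<lambda>(m::nat, l::nat). (m + l, l))"
  define S where "S = Sigma {..k} (\<lambda>m. {..m::nat})"
  define S' where "S' = Sigma {0..2 * k} (\<lambda>j. {0..j div 2})"
  have "(u^2 + v^2 - 3 * u * v) ^ k = sum (R \<circ> shift) S"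
    unfolding trinomial_double_expansion S_def sum.Sigma[OF finite_atMost ballI[OF finite_atMost]]
    by (intro sum.cong refl) (auto simp: R_def shift_def binomial_product_Bterm)
  also have "\<dots> = sum R (shift ` S)"
    by (rule sum.reindex[symmetric]) (auto simp: inj_on_def shift_def)
  also have "\<dots> = sum R S'"
  proof (rule sum.mono_neutral_left)
    show "shift ` S \<subseteq> S'" by (auto simp: shift_def S_def S'_def)
    show "\<forall>p\<in>S' - shift ` S. R p = 0"
    proof
      fix p assume p: "p \<in> S' - shift ` S"
      then obtain j l where pe: "p = (j, l)" and l: "l \<le> j div 2" by (auto simp: S'_def)
      have "\<not> j \<le> k + l"
      proof
        assume "j \<le> k + l"
        then have "(j - l, l) \<in> S" "shift (j - l, l) = (j, l)"
          using l by (auto simp: S_def shift_def)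
        then have "p \<in> shift ` S" using pe by (metis image_eqI)
        then show False using p by blast
      qed
      then show "R p = 0" by (simp add: pe R_def Bterm_def)
    qed
  qed (simp add: S'_def)
  also have "\<dots> = (\<Sum>j = 0..2 * k. Bcoef k j * u ^ (2 * k - j) * v ^ j)"
    by (simp add: S'_def R_def sum.Sigma[symmetric] Bcoef_Bterm sum_distrib_right)
  finally show ?thesis .
qed

text \<open>On the unit square the form u^2 + v^2 - 3uv stays in [-1, 1]: it is at least
  -(u - v)^2 - uv \<ge> -uv, and at most max(u,v)^2 once the cross term absorbs the
  square of the smaller variable.\<close>
lemma quadratic_form_bounded:
  fixes u v :: real
  assumes "0 \<le> u" "u \<le> 1" "0 \<le> v" "v \<le> 1"
  shows "\<bar>u^2 + v^2 - 3 * u * v\<bar> \<le> 1"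
proof -
  have "- (u * v) \<le> u^2 + v^2 - 3 * u * v"
    using power2_diff[of u v] zero_le_power2[of "u - v"] by linarith
  moreover have "u * v \<le> 1" using assms by (simp add: mult_le_one)
  moreover have "u^2 + v^2 - 3 * u * v \<le> 1"
  proof (cases "v \<le> u")
    case True
    then have "v^2 \<le> 3 * u * v" using assms by (simp add: power2_eq_square mult_right_mono)
    moreover have "u^2 \<le> 1" using assms by (simp add: power_le_one)
    ultimately show ?thesis by linarith
  next
    case False
    then have "u * u \<le> u * v" "0 \<le> u * v"
      using assms mult_left_mono[of u v u] by auto
    then have "u^2 \<le> 3 * u * v" by (simp add: power2_eq_square)
    moreover have "v^2 \<le> 1" using assms by (simp add: power_le_one)
    ultimately show ?thesis by linarith
  qed
  ultimately show ?thesis by linarith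
qed

definition biindex :: "nat \<Rightarrow> nat \<Rightarrow> nat \<Rightarrow> nat" where
  "biindex m i = (\<lambda>n. if n = 0 then m - i else if n = 1 then i else 0)"

lemma bij_biindex: "bij_betw (biindex m) {0..m} (multi_indices 2 m)"
proof (rule bij_betwI[where g = "\<lambda>\<alpha>. \<alpha> 1"])
  show "biindex m \<in> {0..m} \<rightarrow> multi_indices 2 m"
    by (auto simp: biindex_def multi_indices_def numeral_2_eq_2)
  show "(\<lambda>\<alpha>. \<alpha> 1) \<in> multi_indices 2 m \<rightarrow> {0..m}"
    by (auto simp: multi_indices_def numeral_2_eq_2)
  show "biindex m i 1 = i" for i by (simp add: biindex_def)
  fix \<alpha> assume "\<alpha> \<in> multi_indices 2 m"
  then have "\<forall>i\<ge>2. \<alpha> i = 0" "\<alpha> 0 + \<alpha> 1 = m"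
    by (auto simp: multi_indices_def numeral_2_eq_2)
  then show "biindex m (\<alpha> 1) = \<alpha>"
    by (intro ext) (auto simp: biindex_def)
qed

lemma sum_multi_indices_2:
  "sum F (multi_indices 2 m) = (\<Sum>i = 0..m. F (biindex m i))"
  using sum.reindex_bij_betw[OF bij_biindex, of F m] by simp

lemma hpoly_two_variables:
  "hpoly 2 m a x = (\<Sum>i = 0..m. a (biindex m i) * (x 0 ^ (m - i) * x 1 ^ i))"
  unfolding hpoly_def sum_multi_indices_2 by (simp add: numeral_2_eq_2 biindex_def)

lemma sum_even_indices:
  fixes H :: "nat \<Rightarrow> 'a::comm_monoid_add"
  shows "(\<Sum>i = 0..2 * n. if even i then H (i div 2) else 0) = (\<Sum>j = 0..n. H j)"
proof (induction n)
  case (Suc n)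
  have "2 * Suc n = Suc (Suc (2 * n))" by simp
  then show ?case using Suc by (simp add: sum.atLeast0_atMost_Suc)
qed simp

lemma poly_norm_eqI:
  assumes "\<And>x. \<forall>i<N. \<bar>x i\<bar> \<le> 1 \<Longrightarrow> \<bar>hpoly N m a x\<bar> \<le> c"
    and "\<forall>i<N. \<bar>z i\<bar> \<le> 1" and "\<bar>hpoly N m a z\<bar> = c"
  shows "poly_norm N m a = c"
  unfolding poly_norm_def
  by (rule cSup_eq_maximum) (use assms in \<open>force+\<close>)

lemma BH_real_lower_bound:
  assumes "poly_norm N m a > 0"
  shows "BH_real m \<ge> ereal ((\<Sum>\<alpha>\<in>multi_indices N m. \<bar>a \<alpha>\<bar> powr (2 * real m / (real m + 1)))
                              powr ((real m + 1) / (2 * real m)) / poly_norm N m a)"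
  unfolding BH_real_def
proof (rule Inf_greatest, safe)
  fix D assume "\<forall>N a. (\<Sum>\<alpha>\<in>multi_indices N m. \<bar>a \<alpha>\<bar> powr (2 * real m / (real m + 1)))
        powr ((real m + 1) / (2 * real m)) \<le> D * poly_norm N m a"
  then show "ereal ((\<Sum>\<alpha>\<in>multi_indices N m. \<bar>a \<alpha>\<bar> powr (2 * real m / (real m + 1)))
        powr ((real m + 1) / (2 * real m)) / poly_norm N m a) \<le> ereal D"
    using assms by (simp add: divide_le_eq)
qed

definition test_coeffs :: "nat \<Rightarrow> (nat \<Rightarrow> nat) \<Rightarrow> real" where
  "test_coeffs k \<alpha> = (if even (\<alpha> 1) then Bcoef k (\<alpha> 1 div 2) else 0)"

lemma hpoly_test_coeffs:
  "hpoly 2 (4 * k) (test_coeffs k) x = ((x 0)^4 + (x 1)^4 - 3 * (x 0)^2 * (x 1)^2) ^ k"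
proof -
  have "hpoly 2 (4 * k) (test_coeffs k) x = (\<Sum>i = 0..4 * k. if even i then
        Bcoef k (i div 2) * (((x 0)^2) ^ (2 * k - i div 2) * ((x 1)^2) ^ (i div 2)) else 0)"
    unfolding hpoly_two_variables
  proof (intro sum.cong refl)
    fix i
    show "test_coeffs k (biindex (4 * k) i) * (x 0 ^ (4 * k - i) * x 1 ^ i) = (if even i then
        Bcoef k (i div 2) * (((x 0)^2) ^ (2 * k - i div 2) * ((x 1)^2) ^ (i div 2)) else 0)"
    proof (cases "even i")
      case True
      then obtain j where "i = 2 * j" by blast
      moreover have "4 * k - 2 * j = 2 * (2 * k - j)" by simp
      ultimately show ?thesis
        by (simp add: test_coeffs_def biindex_def power_mult)
    qed (simp add: test_coeffs_def biindex_def)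
  qed
  also have "\<dots> = (\<Sum>j = 0..2 * k. Bcoef k j * ((x 0)^2) ^ (2 * k - j) * ((x 1)^2) ^ j)"
    using sum_even_indices[of "\<lambda>j. Bcoef k j * (((x 0)^2) ^ (2 * k - j) * ((x 1)^2) ^ j)" "2 * k"]
    by (simp add: mult.assoc)
  also have "\<dots> = ((x 0)^4 + (x 1)^4 - 3 * (x 0)^2 * (x 1)^2) ^ k"
    by (simp only: Bcoef_expansion[symmetric]) (simp flip: power_mult)
  finally show ?thesis .
qed

lemma poly_norm_test_coeffs: "poly_norm 2 (4 * k) (test_coeffs k) = 1"
proof (rule poly_norm_eqI[where z = "\<lambda>i. if i = 0 then 1 else 0"])
  fix x :: "nat \<Rightarrow> real" assume "\<forall>i<2. \<bar>x i\<bar> \<le> 1"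
  then have "(x 0)^2 \<le> 1" "(x 1)^2 \<le> 1"
    by (auto simp: abs_le_square_iff[of _ 1, simplified])
  then have "\<bar>((x 0)^2)^2 + ((x 1)^2)^2 - 3 * (x 0)^2 * (x 1)^2\<bar> \<le> 1"
    by (intro quadratic_form_bounded) auto
  then show "\<bar>hpoly 2 (4 * k) (test_coeffs k) x\<bar> \<le> 1"
    by (simp add: hpoly_test_coeffs power_abs power_le_one flip: power_mult)
qed (auto simp: hpoly_test_coeffs)

lemma coefficient_sum_test_coeffs:
  "(\<Sum>\<alpha>\<in>multi_indices 2 (4 * k). \<bar>test_coeffs k \<alpha>\<bar> powr p) = (\<Sum>j = 0..2 * k. \<bar>Bcoef k j\<bar> powr p)"
proof -
  have "(\<Sum>\<alpha>\<in>multi_indices 2 (4 * k). \<bar>test_coeffs k \<alpha>\<bar> powr p)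
      = (\<Sum>i = 0..4 * k. if even i then \<bar>Bcoef k (i div 2)\<bar> powr p else 0)"
    unfolding sum_multi_indices_2
    by (intro sum.cong refl) (auto simp: test_coeffs_def biindex_def)
  then show ?thesis using sum_even_indices[of "\<lambda>j. \<bar>Bcoef k j\<bar> powr p" "2 * k"] by simp
qed

theorem mainTheorem10:
  fixes k :: nat
  assumes "k \<ge> 1"
  shows "BH_real (4 * k) \<ge>
    ereal ((\<Sum>j = 0..2 * k. \<bar>Bcoef k j\<bar> powr (8 * real k / (4 * real k + 1)))
            powr ((4 * real k + 1) / (8 * real k)))"
proof -
  have "2 * real (4 * k) / (real (4 * k) + 1) = 8 * real k / (4 * real k + 1)"
    and "(real (4 * k) + 1) / (2 * real (4 * k)) = (4 * real k + 1) / (8 * real k)"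
    by simp_all
  then show ?thesis
    using BH_real_lower_bound[of 2 "4 * k" "test_coeffs k"]
    by (simp add: poly_norm_test_coeffs coefficient_sum_test_coeffs)
qed

end
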